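(* Fix a client $D_j$ and let the random variables $Z_1,\dots,Z_{k/\epsilon}$ be as described in the context. Then for every $\ell\in[k]$, every $t\in[\ell-1]$ and every $r\in\{(\ell-1)/\epsilon+1,\dots,\ell/\epsilon\}$, $$H_r(t-1):=\Pr\Big[\sum_{r'=1}^{r-1}Z_{r'}\le t-1 \;\Big|\; Z_r=1\Big]\;\le\; e^{-r\epsilon}\left(\frac{e\, r\,\epsilon}{t}\right)^t.$$
   Context: Instance: clients $D_1,\dots,D_n$, facilities $F_1,\dots,F_m$, nonnegative costs $c_{i,j}$, integer $k\le m$, harmonic weights $w_\ell=1/\ell$ ($\ell\in[k]$). Consider the linear program: minimize $\sum_{j=1}^n\sum_{\ell=1}^k\sum_{i=1}^m w_\ell x^\ell_{ij}c_{ij}$ subject to $\sum_{i=1}^m y_i=k$; $\sum_{\ell=1}^k x^\ell_{ij}\le y_i$ for all $i\in[m],j\in[n]$; $\sum_{i=1}^m x^\ell_{ij}\ge 1$ for all $j\in[n],\ell\in[k]$; $y_i,x^\ell_{ij}\in[0,1]$. Let $(x^*,y^* )$ be an optimal (rational) solution. Dependent rounding (DR) with a fixed tournament tree: fix a rooted binary tree with $m$ leaves, leaf $i$ holding variable $y_i$ initialized to $y^*_i$; repeatedly take two nonempty sibling nodes whose parent is empty. If both hold fractional variables $y_a,y_b$ with $s=y_a+y_b$: if $s\le 1$, with probability $y_a/s$ set $(y_a,y_b)\leftarrow(s,0)$, otherwise $(0,s)$; if $s>1$, with probability $(1-y_b)/(2-s)$ set $(y_a,y_b)\leftarrow(1,s-1)$,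 otherwise $(s-1,1)$. A variable that is still fractional is promoted to the parent; if both became integral a dummy $\bot$ is promoted; if one node holds $\bot$ (or an already integral variable), the other node's content is promoted unchanged. At the end all variables are in $\{0,1\}$; let $Y_i$ be the final value of $y_i$. Now fix the client $D_j$ and renumber facilities so that $c_{1,j}\le c_{2,j}\le\dots\le c_{m,j}$ (ties broken arbitrarily but fixed). Fix $\epsilon>0$ such that $1/\epsilon$ and all $y^*_i/\epsilon$ are integers. Let $\mathrm{submax}(0)=0$, $\mathrm{submax}(i)=\mathrm{submax}(i-1)+y^*_i/\epsilon$, and $\mathrm{sub}(i)=\{\mathrm{submax}(i-1)+1,\dots,\mathrm{submax}(i)\}$, so $\{1,\dots,k/\epsilon\}$ is partitioned into the blocks $\mathrm{sub}(i)$. Define $Z_1,\dots,Z_{k/\epsilon}\in\{0,1\}$ as follows: for each $i$ with $Y_i=1$, independently of everything else choose one index $r\in\mathrm{sub}(i)$ uniformly at random and set $Z_r=1$; all other $Z_r$ are $0$. Thus $Y_i=\sum_{r\in\mathrm{sub}(i)}Z_r$ and $\Pr[Z_r=1]=\epsilon$ for all $r$. *)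

theory Defs
  imports "HOL-Probability.Probability"
begin

text \<open>Facilities are indexed 1..m, clients 1..n, levels 1..k.
  c i j is the cost of facility i for client j; x l i j is the LP variable x^l_{ij}.\<close>

definition lp_feasible ::
  "nat \<Rightarrow> nat \<Rightarrow> nat \<Rightarrow> (nat \<Rightarrow> nat \<Rightarrow> nat \<Rightarrow> real) \<Rightarrow> (nat \<Rightarrow> real) \<Rightarrow> bool" where
  "lp_feasible n m k x y \<longleftrightarrow>
     (\<Sum>i=1..m. y i) = real k \<and>
     (\<forall>i\<in>{1..m}. \<forall>j\<in>{1..n}. (\<Sum>l=1..k. x l i j) \<le> y i) \<and>
     (\<forall>j\<in>{1..n}. \<forall>l\<in>{1..k}. (\<Sum>i=1..m. x l i j) \<ge> 1) \<and>
     (\<forall>i\<in>{1..m}. 0 \<le> y i \<and> y i \<le> 1) \<and>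
     (\<forall>l\<in>{1..k}. \<forall>i\<in>{1..m}. \<forall>j\<in>{1..n}. 0 \<le> x l i j \<and> x l i j \<le> 1)"

definition lp_obj ::
  "nat \<Rightarrow> nat \<Rightarrow> nat \<Rightarrow> (nat \<Rightarrow> nat \<Rightarrow> real) \<Rightarrow> (nat \<Rightarrow> nat \<Rightarrow> nat \<Rightarrow> real) \<Rightarrow> real" where
  "lp_obj n m k c x = (\<Sum>j=1..n. \<Sum>l=1..k. \<Sum>i=1..m. (1 / real l) * x l i j * c i j)"

definition lp_optimal ::
  "nat \<Rightarrow> nat \<Rightarrow> nat \<Rightarrow> (nat \<Rightarrow> nat \<Rightarrow> real) \<Rightarrow> (nat \<Rightarrow> nat \<Rightarrow> nat \<Rightarrow> real) \<Rightarrow> (nat \<Rightarrow> real) \<Rightarrow> bool" where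
  "lp_optimal n m k c x y \<longleftrightarrow> lp_feasible n m k x y \<and>
     (\<forall>x' y'. lp_feasible n m k x' y' \<longrightarrow> lp_obj n m k c x \<le> lp_obj n m k c x')"

datatype ttree = Leaf nat | Node ttree ttree

fun leaves :: "ttree \<Rightarrow> nat list" where
  "leaves (Leaf i) = [i]"
| "leaves (Node l r) = leaves l @ leaves r"

text \<open>Content promoted to the parent: Some a (the fractional variable y_a) or None (dummy bottom).\<close>
definition promote :: "nat \<Rightarrow> real \<Rightarrow> nat option" where
  "promote a v = (if 0 < v \<and> v < 1 then Some a else None)"

fun dr_step :: "(nat \<Rightarrow> real) \<Rightarrow> nat option \<Rightarrow> nat option \<Rightarrow> ((nat \<Rightarrow> real) \<times> nat option) pmf" where
  "dr_step f (Some a) (Some b) =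
     (let ya = f a; yb = f b; s = ya + yb in
      if s \<le> 1 then
        map_pmf (\<lambda>c. if c then (f(a := s, b := 0), promote a s) else (f(a := 0, b := s), promote b s))
          (bernoulli_pmf (ya / s))
      else
        map_pmf (\<lambda>c. if c then (f(a := 1, b := s - 1), promote b (s - 1))
                          else (f(a := s - 1, b := 1), promote a (s - 1)))
          (bernoulli_pmf ((1 - yb) / (2 - s))))"
| "dr_step f (Some a) None = return_pmf (f, Some a)"
| "dr_step f None (Some b) = return_pmf (f, Some b)"
| "dr_step f None None = return_pmf (f, None)"

text \<open>Result of processing a subtree: current values of the variables at its leaves
  (0 elsewhere) and the promoted content.  Integral leaf variables behave like bottom.\<close>
fun dr :: "(nat \<Rightarrow> real) \<Rightarrow> ttree \<Rightarrow> ((nat \<Rightarrow> real) \<times> nat option) pmf" where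
  "dr y (Leaf i) = return_pmf ((\<lambda>_. 0)(i := y i), promote i (y i))"
| "dr y (Node l r) =
     bind_pmf (dr y l) (\<lambda>(f1, p1). bind_pmf (dr y r) (\<lambda>(f2, p2).
       dr_step (\<lambda>i. if i \<in> set (leaves l) then f1 i else f2 i) p1 p2))"

definition Y_dist :: "(nat \<Rightarrow> real) \<Rightarrow> ttree \<Rightarrow> (nat \<Rightarrow> real) pmf" where
  "Y_dist y T = map_pmf fst (dr y T)"

text \<open>sigma p is the facility at sorted position p (positions 1..m).\<close>
definition submax :: "(nat \<Rightarrow> real) \<Rightarrow> (nat \<Rightarrow> nat) \<Rightarrow> real \<Rightarrow> nat \<Rightarrow> real" where
  "submax y \<sigma> \<epsilon> p = (\<Sum>q=1..p. y (\<sigma> q) / \<epsilon>)"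

definition sub_blk :: "(nat \<Rightarrow> real) \<Rightarrow> (nat \<Rightarrow> nat) \<Rightarrow> real \<Rightarrow> nat \<Rightarrow> nat set" where
  "sub_blk y \<sigma> \<epsilon> p = {r. submax y \<sigma> \<epsilon> (p - 1) < real r \<and> real r \<le> submax y \<sigma> \<epsilon> p}"

text \<open>Distribution of the set {r. Z_r = 1}: for every position p whose facility is opened
  (Y = 1), independently pick a uniform index of sub p.\<close>
definition Z_dist :: "nat \<Rightarrow> (nat \<Rightarrow> real) \<Rightarrow> ttree \<Rightarrow> (nat \<Rightarrow> nat) \<Rightarrow> real \<Rightarrow> nat set pmf" where
  "Z_dist m y T \<sigma> \<epsilon> =
     bind_pmf (Y_dist y T) (\<lambda>Y.
       map_pmf (\<lambda>ch. ch ` {p\<in>{1..m}. Y (\<sigma> p) = 1})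
         (Pi_pmf {p\<in>{1..m}. Y (\<sigma> p) = 1} 0 (\<lambda>p. pmf_of_set (sub_blk y \<sigma> \<epsilon> p))))"

definition H :: "nat \<Rightarrow> (nat \<Rightarrow> real) \<Rightarrow> ttree \<Rightarrow> (nat \<Rightarrow> nat) \<Rightarrow> real \<Rightarrow> nat \<Rightarrow> nat \<Rightarrow> real" where
  "H m y T \<sigma> \<epsilon> r s =
     measure_pmf.prob (Z_dist m y T \<sigma> \<epsilon>) {S. card (S \<inter> {1..<r}) \<le> s \<and> r \<in> S}
     / measure_pmf.prob (Z_dist m y T \<sigma> \<epsilon>) {S. r \<in> S}"

end

theory Submission
  imports Defs
begin

(*
  Dependent rounding keeps every variable in [0,1], never revives a variable that is 0,
  preserves the total and leaves at most the promoted variable fractional; since the total k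
  is an integer, the final vector Y is 0/1-valued.  A rounding step on a pair (y_a, y_b) moves
  to one of two outcomes that preserve the mean and have the same sum and the same product.
  Consequently E[prod_i w_i(Y_i)] <= prod_i w_i(y_i) whenever each weight w_i is one of
  1, x, 1 - c x, x (1 - c x) and the factor x is used at most once.  This gives
  Pr[Y_i = 1] >= y_i and E[Y_a prod_{i in U} (1 - c Y_i)] <= y_a prod_{i in U} (1 - c y_i).

  The blocks sub(p) are consecutive intervals, so given Y the event Z_r = 1 says that the
  facility p owning r is open and picks r, and then the number of earlier ones among the Z's
  is the number of earlier open facilities.  On the event of at most t - 1 of them, the
  indicator is bounded by theta^(-t) Y_p prod_{q <= p} (1 - (1 - theta) Y_q) with
  theta = t / (r eps).  Taking expectations and using sum_{q <= p} y_q >= r eps yields the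
  Chernoff bound e^(-r eps) (e r eps / t)^t times y_p <= Pr[Y_p = 1]; the probability of
  picking r inside sub(p) cancels in the conditional probability.
*)

lemma sum_fun_upd2:
  fixes f :: "'a \<Rightarrow> 'b::ab_group_add"
  assumes "finite L" "a \<in> L" "b \<in> L" "a \<noteq> b"
  shows "sum (f(a := u, b := v)) L = sum f L - f a - f b + u + v"
proof -
  have rest: "sum (f(a := u, b := v)) (L - {a, b}) = sum f (L - {a, b})"
    by (rule sum.cong) auto
  have "sum h L = h a + h b + sum h (L - {a, b})" for h :: "'a \<Rightarrow> 'b"
  proof -
    have "sum h L = h a + sum h (L - {a})" using assms by (simp add: sum.remove)
    also have "sum h (L - {a}) = h b + sum h (L - {a} - {b})" using assms by (simp add: sum.remove)
    finally show ?thesis by (simp add: Diff_insert2[symmetric] add.assoc)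
  qed
  from this[of "f(a := u, b := v)"] this[of f] rest assms(4) show ?thesis
    by (simp add: algebra_simps)
qed

lemma prod_fun_upd2:
  fixes h :: "'a \<Rightarrow> 'b \<Rightarrow> 'c::comm_monoid_mult"
  assumes "finite L" "i1 \<in> L" "i2 \<in> L" "i1 \<noteq> i2"
  shows "(\<Prod>i\<in>L. h i ((f(i1 := u1, i2 := u2)) i)) = h i1 u1 * h i2 u2 * (\<Prod>i\<in>L - {i1, i2}. h i (f i))"
proof -
  let ?g = "\<lambda>i. h i ((f(i1 := u1, i2 := u2)) i)"
  have "prod ?g L = ?g i1 * prod ?g (L - {i1})" by (rule prod.remove) (use assms in auto)
  also have "prod ?g (L - {i1}) = ?g i2 * prod ?g (L - {i1} - {i2})" by (rule prod.remove) (use assms in auto)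
  also have "prod ?g (L - {i1} - {i2}) = (\<Prod>i\<in>L - {i1, i2}. h i (f i))" by (rule prod.cong) auto
  finally have "prod ?g L = ?g i1 * (?g i2 * (\<Prod>i\<in>L - {i1, i2}. h i (f i)))" .
  moreover have "?g i1 = h i1 u1" "?g i2 = h i2 u2" using assms(4) by simp_all
  ultimately show ?thesis by (simp only: mult.assoc)
qed

lemma ennreal_convex_comb:
  fixes A B q :: real
  assumes "0 \<le> A" "0 \<le> B" "0 \<le> q" "q \<le> 1"
  shows "ennreal A * ennreal q + ennreal B * ennreal (1 - q) = ennreal (A * q + B * (1 - q))"
  using assms by (simp add: ennreal_plus ennreal_mult'')

lemma cond_prob_le:
  fixes M :: "'a pmf" and B :: real
  assumes "emeasure M A \<le> ennreal B * emeasure M C" "0 \<le> B"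
  shows "measure_pmf.prob M A / measure_pmf.prob M C \<le> B"
proof -
  have "measure_pmf.prob M A \<le> B * measure_pmf.prob M C"
    using assms by (simp add: measure_pmf.emeasure_eq_measure ennreal_mult''[symmetric])
  then show ?thesis
    by (cases "measure_pmf.prob M C = 0") (simp_all add: assms(2) divide_le_eq less_le)
qed

section \<open>Invariants of dependent rounding\<close>

definition dr_invariant :: "(nat \<Rightarrow> real) \<Rightarrow> nat set \<Rightarrow> (nat \<Rightarrow> real) \<Rightarrow> nat option \<Rightarrow> bool" where
  "dr_invariant y L f p \<longleftrightarrow>
     (\<forall>i\<in>L. 0 \<le> f i \<and> f i \<le> 1) \<and> (\<forall>i\<in>L. y i = 0 \<longrightarrow> f i = 0) \<and>
     (\<forall>i\<in>L. p \<noteq> Some i \<longrightarrow> f i = 0 \<or> f i = 1) \<and>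
     (\<forall>a. p = Some a \<longrightarrow> a \<in> L \<and> 0 < f a \<and> f a < 1) \<and>
     sum f L = sum y L"

lemma set_pmf_dr_step_Some_Some:
  assumes "(f, p) \<in> set_pmf (dr_step g (Some a) (Some b))"
    and "0 \<le> g a" "g a \<le> 1" "0 \<le> g b" "g b \<le> 1"
  obtains u v where "f = g(a := u, b := v)" "u + v = g a + g b"
    "0 \<le> u" "u \<le> 1" "0 \<le> v" "v \<le> 1"
    "(p = Some a \<and> 0 < u \<and> u < 1 \<and> (v = 0 \<or> v = 1))
      \<or> (p = Some b \<and> 0 < v \<and> v < 1 \<and> (u = 0 \<or> u = 1))
      \<or> (p = None \<and> (u = 0 \<or> u = 1) \<and> (v = 0 \<or> v = 1))"
proof -
  have promote: "(promote i w = Some i \<and> 0 < w \<and> w < 1) \<or> (promote i w = None \<and> (w = 0 \<or> w = 1))"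
    if "0 \<le> w" "w \<le> 1" for i w
    using that by (auto simp: promote_def)
  let ?s = "g a + g b"
  from assms(1) consider
      "?s \<le> 1" "f = g(a := ?s, b := 0)" "p = promote a ?s"
    | "?s \<le> 1" "f = g(a := 0, b := ?s)" "p = promote b ?s"
    | "\<not> ?s \<le> 1" "f = g(a := 1, b := ?s - 1)" "p = promote b (?s - 1)"
    | "\<not> ?s \<le> 1" "f = g(a := ?s - 1, b := 1)" "p = promote a (?s - 1)"
    by (auto simp: Let_def split: if_split_asm)
  then show ?thesis
  proof cases
    case 1
    then show ?thesis using that[of ?s 0] promote[of ?s a] assms(2-5) by auto
  next
    case 2
    then show ?thesis using that[of 0 ?s] promote[of ?s b] assms(2-5) by auto
  next
    case 3
    then show ?thesis using that[of 1 "?s - 1"] promote[of "?s - 1" b] assms(2-5) by auto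
  next
    case 4
    then show ?thesis using that[of "?s - 1" 1] promote[of "?s - 1" a] assms(2-5) by auto
  qed
qed

lemma dr_invariant_dr_step:
  assumes fin: "finite L"
    and g01: "\<forall>i\<in>L. 0 \<le> g i \<and> g i \<le> 1" and gy: "\<forall>i\<in>L. y i = 0 \<longrightarrow> g i = 0"
    and gint: "\<forall>i\<in>L. p1 \<noteq> Some i \<longrightarrow> p2 \<noteq> Some i \<longrightarrow> g i = 0 \<or> g i = 1"
    and gp1: "\<forall>a. p1 = Some a \<longrightarrow> a \<in> L \<and> 0 < g a \<and> g a < 1"
    and gp2: "\<forall>a. p2 = Some a \<longrightarrow> a \<in> L \<and> 0 < g a \<and> g a < 1"
    and disj: "\<forall>a b. p1 = Some a \<longrightarrow> p2 = Some b \<longrightarrow> a \<noteq> b"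
    and gs: "sum g L = sum y L"
    and fp: "(f, p) \<in> set_pmf (dr_step g p1 p2)"
  shows "dr_invariant y L f p"
proof (cases "\<exists>a b. p1 = Some a \<and> p2 = Some b")
  case False
  then show ?thesis
    using fp g01 gy gint gp1 gp2 gs
    by (cases p1; cases p2) (auto simp: dr_invariant_def)
next
  case True
  then obtain a b where ab: "p1 = Some a" "p2 = Some b" by blast
  have a: "a \<in> L" "0 < g a" "g a < 1" and b: "b \<in> L" "0 < g b" "g b < 1" and "a \<noteq> b"
    using gp1 gp2 disj ab by auto
  obtain u v where f: "f = g(a := u, b := v)" and uv: "u + v = g a + g b"
      "0 \<le> u" "u \<le> 1" "0 \<le> v" "v \<le> 1"
    and p_cases: "(p = Some a \<and> 0 < u \<and> u < 1 \<and> (v = 0 \<or> v = 1))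
      \<or> (p = Some b \<and> 0 < v \<and> v < 1 \<and> (u = 0 \<or> u = 1))
      \<or> (p = None \<and> (u = 0 \<or> u = 1) \<and> (v = 0 \<or> v = 1))"
    using set_pmf_dr_step_Some_Some[of f p g a b] fp ab a b by auto
  have fp_new: "\<forall>i\<in>L. p \<noteq> Some i \<longrightarrow> f i = 0 \<or> f i = 1"
  proof (intro ballI impI)
    fix i assume "i \<in> L" "p \<noteq> Some i"
    then show "f i = 0 \<or> f i = 1"
      using p_cases gint ab unfolding f by (cases "i = a"; cases "i = b") auto
  qed
  have p_new: "\<forall>a'. p = Some a' \<longrightarrow> a' \<in> L \<and> 0 < f a' \<and> f a' < 1"
    using p_cases a(1) b(1) \<open>a \<noteq> b\<close> unfolding f by auto
  have "sum f L = sum y L"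
    using sum_fun_upd2[OF fin a(1) b(1) \<open>a \<noteq> b\<close>, of g u v] f uv(1) gs by simp
  then show ?thesis
    unfolding dr_invariant_def using fp_new p_new g01 gy uv a b f by auto
qed

lemma set_pmf_dr_Node:
  assumes "(f, p) \<in> set_pmf (dr y (Node l r))"
  obtains f1 p1 f2 p2 where "(f1, p1) \<in> set_pmf (dr y l)" "(f2, p2) \<in> set_pmf (dr y r)"
    "(f, p) \<in> set_pmf (dr_step (\<lambda>i. if i \<in> set (leaves l) then f1 i else f2 i) p1 p2)"
proof -
  from assms obtain z1 z2 where "z1 \<in> set_pmf (dr y l)" "z2 \<in> set_pmf (dr y r)"
    "(f, p) \<in> set_pmf (dr_step (\<lambda>i. if i \<in> set (leaves l) then fst z1 i else fst z2 i) (snd z1) (snd z2))"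
    by (auto simp: case_prod_unfold)
  then show ?thesis using that[of "fst z1" "snd z1" "fst z2" "snd z2"] by simp
qed

lemma dr_invariant_dr:
  assumes "distinct (leaves T)" "\<forall>i\<in>set (leaves T). 0 \<le> y i \<and> y i \<le> 1"
    and "(f, p) \<in> set_pmf (dr y T)"
  shows "dr_invariant y (set (leaves T)) f p"
  using assms
proof (induction T arbitrary: f p)
  case (Leaf i)
  then show ?case by (auto simp: dr_invariant_def promote_def)
next
  case (Node l r)
  let ?A = "set (leaves l)" and ?B = "set (leaves r)"
  from Node.prems(3) obtain f1 p1 f2 p2 where
    fp1: "(f1, p1) \<in> set_pmf (dr y l)" and fp2: "(f2, p2) \<in> set_pmf (dr y r)" and
    fp: "(f, p) \<in> set_pmf (dr_step (\<lambda>i. if i \<in> ?A then f1 i else f2 i) p1 p2)"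
    by (rule set_pmf_dr_Node)
  have disj: "?A \<inter> ?B = {}" using Node.prems(1) by auto
  have I1: "dr_invariant y ?A f1 p1" and I2: "dr_invariant y ?B f2 p2"
    using Node.IH fp1 fp2 Node.prems(1,2) by auto
  have "sum (\<lambda>i. if i \<in> ?A then f1 i else f2 i) (?A \<union> ?B) = sum f1 ?A + sum f2 ?B"
    using disj by (simp add: sum.union_disjoint) (auto intro!: sum.cong)
  also have "\<dots> = sum y (?A \<union> ?B)"
    using I1 I2 disj by (simp add: dr_invariant_def sum.union_disjoint)
  finally have "dr_invariant y (?A \<union> ?B) f p"
    using I1 I2 disj
    by (intro dr_invariant_dr_step[OF _ _ _ _ _ _ _ _ fp]) (auto simp: dr_invariant_def)
  then show ?case by simp
qed

lemma set_pmf_Y_dist: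
  assumes "distinct (leaves T)" "set (leaves T) = {1..m}"
    and y01: "\<forall>i\<in>{1..m}. 0 \<le> y i \<and> y i \<le> 1" and ysum: "(\<Sum>i=1..m. y i) = real k"
    and Y: "Y \<in> set_pmf (Y_dist y T)" and i: "i \<in> {1..m}"
  shows "Y i = 0 \<or> Y i = 1" and "y i = 0 \<Longrightarrow> Y i = 0"
proof -
  from Y obtain p where "(Y, p) \<in> set_pmf (dr y T)" by (auto simp: Y_dist_def)
  then have I: "dr_invariant y {1..m} Y p" using dr_invariant_dr assms(1,2) y01 by metis
  have "p = None" \<comment> \<open>a fractional survivor would equal k minus a number of ones\<close>
  proof (rule ccontr)
    assume "p \<noteq> None"
    then obtain a where a: "p = Some a" by blast
    then have aL: "a \<in> {1..m}" "0 < Y a" "Y a < 1" using I by (auto simp: dr_invariant_def)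
    have "sum Y ({1..m} - {a}) = real (card {i\<in>{1..m} - {a}. Y i = 1})"
      using I a by (subst sum.cong[of _ _ _ "\<lambda>i. if Y i = 1 then 1 else 0"])
        (auto simp: dr_invariant_def sum.If_cases Int_def)
    moreover have "sum Y {1..m} = Y a + sum Y ({1..m} - {a})" using aL by (simp add: sum.remove)
    ultimately have "Y a = of_int (int k - int (card {i\<in>{1..m} - {a}. Y i = 1}))"
      using I ysum by (simp add: dr_invariant_def)
    then obtain z :: int where z: "Y a = of_int z" by blast
    have "0 < z" "z < 1" using aL unfolding z by simp_all
    then show False by simp
  qed
  with I i show "Y i = 0 \<or> Y i = 1" and "y i = 0 \<Longrightarrow> Y i = 0"
    unfolding dr_invariant_def by blast+
qed

section \<open>Negative correlation\<close>

definition pot_factor :: "bool \<Rightarrow> bool \<Rightarrow> real \<Rightarrow> real \<Rightarrow> real" where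
  "pot_factor marked discounted c x = (if marked then x else 1) * (if discounted then 1 - c * x else 1)"

definition potential :: "nat option \<Rightarrow> nat set \<Rightarrow> real \<Rightarrow> nat set \<Rightarrow> (nat \<Rightarrow> real) \<Rightarrow> real" where
  "potential a U c L f = (\<Prod>i\<in>L. pot_factor (a = Some i) (i \<in> U) c (f i))"

lemma pot_factor_nonneg: "0 \<le> x \<Longrightarrow> x \<le> 1 \<Longrightarrow> 0 \<le> c \<Longrightarrow> c \<le> 1 \<Longrightarrow> 0 \<le> pot_factor b d c x"
  using mult_mono[of c 1 x 1] by (simp add: pot_factor_def)

lemma potential_nonneg:
  "\<forall>i\<in>L. 0 \<le> f i \<and> f i \<le> 1 \<Longrightarrow> 0 \<le> c \<Longrightarrow> c \<le> 1 \<Longrightarrow> 0 \<le> potential a U c L f"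
  unfolding potential_def by (intro prod_nonneg) (auto intro: pot_factor_nonneg)

lemma pot_factor_mix_single:
  fixes q A1 A2 x c :: real
  assumes q: "0 \<le> q" "q \<le> 1" and mean: "q * A1 + (1 - q) * A2 = x"
    and c: "0 \<le> c" and marked: "b \<longrightarrow> d"
  shows "q * pot_factor b d c A1 + (1 - q) * pot_factor b d c A2 \<le> pot_factor b d c x"
proof (cases b)
  case True
  have "x\<^sup>2 \<le> q * A1\<^sup>2 + (1 - q) * A2\<^sup>2"
  proof -
    have "q * A1\<^sup>2 + (1 - q) * A2\<^sup>2 - x\<^sup>2 = q * (1 - q) * (A1 - A2)\<^sup>2"
      unfolding mean[symmetric] by (simp add: power2_eq_square algebra_simps)
    moreover have "0 \<le> q * (1 - q) * (A1 - A2)\<^sup>2" using q by simp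
    ultimately show ?thesis by linarith
  qed
  then have "x - c * (q * A1\<^sup>2 + (1 - q) * A2\<^sup>2) \<le> x - c * x\<^sup>2"
    using c by (simp add: mult_left_mono)
  then show ?thesis
    using True marked unfolding mean[symmetric] by (simp add: pot_factor_def power2_eq_square algebra_simps)
next
  case False
  then show ?thesis unfolding mean[symmetric] by (cases d) (simp_all add: pot_factor_def algebra_simps)
qed

text \<open>Both outcomes have the same sum and the same product of the two coordinates, so
  the product of the two discount factors is the same constant in both outcomes.\<close>
lemma pot_factor_mix_pair:
  fixes q A1 B1 A2 B2 xa xb c \<kappa> :: real
  assumes q: "0 \<le> q" "q \<le> 1" and mean: "q * A1 + (1 - q) * A2 = xa" "q * B1 + (1 - q) * B2 = xb"
    and sum: "A1 + B1 = xa + xb" "A2 + B2 = xa + xb"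
    and prod: "A1 * B1 = \<kappa>" "A2 * B2 = \<kappa>" and \<kappa>: "\<kappa> \<le> xa * xb"
    and c: "0 \<le> c" and xa: "0 \<le> xa" and marked: "b \<longrightarrow> d"
  shows "q * (pot_factor b d c A1 * (1 - c * B1)) + (1 - q) * (pot_factor b d c A2 * (1 - c * B2))
         \<le> pot_factor b d c xa * (1 - c * xb)"
proof -
  define K where "K = 1 - c * (xa + xb) + c\<^sup>2 * \<kappa>"
  have K: "(1 - c * A) * (1 - c * B) = K" if "A + B = xa + xb" "A * B = \<kappa>" for A B
  proof -
    have "(1 - c * A) * (1 - c * B) = 1 - c * (A + B) + c\<^sup>2 * (A * B)"
      by (simp add: power2_eq_square algebra_simps)
    then show ?thesis using that unfolding K_def by simp
  qed
  have "K \<le> 1 - c * (xa + xb) + c\<^sup>2 * (xa * xb)"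
    unfolding K_def using mult_left_mono[OF \<kappa>, of "c\<^sup>2"] by simp
  then have K_le: "K \<le> (1 - c * xa) * (1 - c * xb)"
    by (simp add: power2_eq_square algebra_simps)
  consider "\<not> d" | "\<not> b" "d" | "b" "d" using marked by blast
  then show ?thesis
  proof cases
    case 1
    then show ?thesis using marked unfolding mean(2)[symmetric] by (simp add: pot_factor_def algebra_simps)
  next
    case 2
    then show ?thesis using K[OF sum(1) prod(1)] K[OF sum(2) prod(2)] K_le
      by (simp add: pot_factor_def algebra_simps)
  next
    case 3
    have "q * (A1 * ((1 - c * A1) * (1 - c * B1))) + (1 - q) * (A2 * ((1 - c * A2) * (1 - c * B2)))
        = xa * K"
      unfolding K[OF sum(1) prod(1)] K[OF sum(2) prod(2)] mean(1)[symmetric] by (simp add: algebra_simps)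
    also have "\<dots> \<le> xa * ((1 - c * xa) * (1 - c * xb))" using K_le xa by (rule mult_left_mono)
    finally show ?thesis using 3 by (simp add: pot_factor_def mult.assoc)
  qed
qed

lemma pot_factor_mix:
  fixes q A1 B1 A2 B2 xa xb c \<kappa> :: real
  assumes q: "0 \<le> q" "q \<le> 1" and mean: "q * A1 + (1 - q) * A2 = xa" "q * B1 + (1 - q) * B2 = xb"
    and sum: "A1 + B1 = xa + xb" "A2 + B2 = xa + xb"
    and prod: "A1 * B1 = \<kappa>" "A2 * B2 = \<kappa>" and \<kappa>: "\<kappa> \<le> xa * xb"
    and c: "0 \<le> c" and x: "0 \<le> xa" "0 \<le> xb"
    and marked: "ba \<longrightarrow> da" "bb \<longrightarrow> db" "\<not> (ba \<and> bb)"
  shows "q * (pot_factor ba da c A1 * pot_factor bb db c B1)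
           + (1 - q) * (pot_factor ba da c A2 * pot_factor bb db c B2)
         \<le> pot_factor ba da c xa * pot_factor bb db c xb"
proof -
  have sum': "B1 + A1 = xb + xa" "B2 + A2 = xb + xa" and prod': "B1 * A1 = \<kappa>" "B2 * A2 = \<kappa>"
    and \<kappa>': "\<kappa> \<le> xb * xa"
    using sum prod \<kappa> by (simp_all add: ac_simps)
  consider "\<not> bb" "\<not> db" | "\<not> bb" "db" | "\<not> ba" "\<not> da" | "\<not> ba" "da"
    using marked by blast
  then show ?thesis
  proof cases
    case 1
    then show ?thesis using pot_factor_mix_single[OF q mean(1) c marked(1)] by (simp add: pot_factor_def)
  next
    case 2
    then show ?thesis using pot_factor_mix_pair[OF q mean sum prod \<kappa> c x(1) marked(1)]
      by (simp add: pot_factor_def)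
  next
    case 3
    then show ?thesis using pot_factor_mix_single[OF q mean(2) c marked(2)] by (simp add: pot_factor_def)
  next
    case 4
    then show ?thesis using pot_factor_mix_pair[OF q mean(2,1) sum' prod' \<kappa>' c x(2) marked(2)]
      by (simp add: pot_factor_def mult.commute)
  qed
qed

lemma pot_factor_mix_merge:
  fixes xa xb c :: real
  assumes x: "0 < xa" "0 < xb" and c: "0 \<le> c"
    and marked: "ba \<longrightarrow> da" "bb \<longrightarrow> db" "\<not> (ba \<and> bb)"
  shows "xa / (xa + xb) * (pot_factor ba da c (xa + xb) * pot_factor bb db c 0)
       + (1 - xa / (xa + xb)) * (pot_factor ba da c 0 * pot_factor bb db c (xa + xb))
       \<le> pot_factor ba da c xa * pot_factor bb db c xb"
proof (rule pot_factor_mix[where \<kappa> = 0])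
  show "0 \<le> xa / (xa + xb)" "xa / (xa + xb) \<le> 1" using x by auto
  show "xa / (xa + xb) * (xa + xb) + (1 - xa / (xa + xb)) * 0 = xa"
    "xa / (xa + xb) * 0 + (1 - xa / (xa + xb)) * (xa + xb) = xb"
    using x by (simp_all add: field_simps)
qed (use x c marked in auto)

lemma pot_factor_mix_split:
  fixes xa xb c :: real
  assumes x: "0 < xa" "0 < xb" "xa < 1" "xb < 1" "1 < xa + xb" and c: "0 \<le> c"
    and marked: "ba \<longrightarrow> da" "bb \<longrightarrow> db" "\<not> (ba \<and> bb)"
  defines "q \<equiv> (1 - xb) / (2 - (xa + xb))"
  shows "q * (pot_factor ba da c 1 * pot_factor bb db c (xa + xb - 1))
       + (1 - q) * (pot_factor ba da c (xa + xb - 1) * pot_factor bb db c 1)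
       \<le> pot_factor ba da c xa * pot_factor bb db c xb"
proof (rule pot_factor_mix[where \<kappa> = "xa + xb - 1"])
  have d: "0 < 2 - (xa + xb)" using x by simp
  show "0 \<le> q" "q \<le> 1" using x d unfolding q_def by (auto simp: divide_le_eq)
  have "q * (2 - (xa + xb)) = 1 - xb" using d unfolding q_def by simp
  then show "q * 1 + (1 - q) * (xa + xb - 1) = xa" "q * (xa + xb - 1) + (1 - q) * 1 = xb"
    by (simp_all add: algebra_simps)
  have "0 \<le> (1 - xa) * (1 - xb)" using x by simp
  then show "xa + xb - 1 \<le> xa * xb" by (simp add: algebra_simps)
qed (use x c marked in auto)

lemma potential_mix:
  assumes L: "finite L" "i1 \<in> L" "i2 \<in> L" "i1 \<noteq> i2"
    and f01: "\<forall>i\<in>L. 0 \<le> f i \<and> f i \<le> 1" and c: "0 \<le> c" "c \<le> 1"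
    and q: "0 \<le> q" "q \<le> 1" and u: "u1 \<in> {0..1}" "v1 \<in> {0..1}" "u2 \<in> {0..1}" "v2 \<in> {0..1}"
    and mix: "q * (pot_factor (a = Some i1) (i1 \<in> U) c u1 * pot_factor (a = Some i2) (i2 \<in> U) c v1)
      + (1 - q) * (pot_factor (a = Some i1) (i1 \<in> U) c u2 * pot_factor (a = Some i2) (i2 \<in> U) c v2)
      \<le> pot_factor (a = Some i1) (i1 \<in> U) c (f i1) * pot_factor (a = Some i2) (i2 \<in> U) c (f i2)"
  shows "ennreal (potential a U c L (f(i1 := u1, i2 := v1))) * ennreal q
       + ennreal (potential a U c L (f(i1 := u2, i2 := v2))) * ennreal (1 - q)
       \<le> ennreal (potential a U c L f)"
proof -
  let ?P1 = "pot_factor (a = Some i1) (i1 \<in> U) c" and ?P2 = "pot_factor (a = Some i2) (i2 \<in> U) c"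
  define R where "R = potential a U c (L - {i1, i2}) f"
  have R: "0 \<le> R" unfolding R_def using f01 c by (intro potential_nonneg) auto
  have upd: "potential a U c L (f(i1 := u, i2 := v)) = ?P1 u * ?P2 v * R" for u v
    unfolding potential_def R_def by (rule prod_fun_upd2[OF L])
  have nonneg: "0 \<le> ?P1 u * ?P2 v * R" if "u \<in> {0..1}" "v \<in> {0..1}" for u v
    using that c R by (auto intro!: mult_nonneg_nonneg pot_factor_nonneg)
  have "ennreal (?P1 u1 * ?P2 v1 * R) * ennreal q + ennreal (?P1 u2 * ?P2 v2 * R) * ennreal (1 - q)
      = ennreal (?P1 u1 * ?P2 v1 * R * q + ?P1 u2 * ?P2 v2 * R * (1 - q))"
    using nonneg[OF u(1,2)] nonneg[OF u(3,4)] q by (rule ennreal_convex_comb)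
  also have "?P1 u1 * ?P2 v1 * R * q + ?P1 u2 * ?P2 v2 * R * (1 - q)
      = (q * (?P1 u1 * ?P2 v1) + (1 - q) * (?P1 u2 * ?P2 v2)) * R"
    by (simp add: algebra_simps)
  also have "\<dots> \<le> ennreal (?P1 (f i1) * ?P2 (f i2) * R)"
    using mult_right_mono[OF mix R] by (intro ennreal_leI) simp
  finally show ?thesis using upd[of "f i1" "f i2"] upd by simp
qed

lemma nn_integral_dr_step_potential:
  assumes fin: "finite L"
    and p1: "\<And>i. p1 = Some i \<Longrightarrow> i \<in> L \<and> 0 < g i \<and> g i < 1"
    and p2: "\<And>i. p2 = Some i \<Longrightarrow> i \<in> L \<and> 0 < g i \<and> g i < 1"
    and disj: "\<And>i1 i2. p1 = Some i1 \<Longrightarrow> p2 = Some i2 \<Longrightarrow> i1 \<noteq> i2"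
    and g01: "\<forall>i\<in>L. 0 \<le> g i \<and> g i \<le> 1" and c: "0 \<le> c" "c \<le> 1" and marked: "set_option a \<subseteq> U"
  shows "(\<integral>\<^sup>+z. ennreal (potential a U c L (fst z)) \<partial>dr_step g p1 p2) \<le> ennreal (potential a U c L g)"
proof (cases "\<exists>i1 i2. p1 = Some i1 \<and> p2 = Some i2")
  case False
  then show ?thesis by (cases p1; cases p2) auto
next
  case True
  then obtain i1 i2 where p: "p1 = Some i1" "p2 = Some i2" by blast
  have i1: "i1 \<in> L" "0 < g i1" "g i1 < 1" and i2: "i2 \<in> L" "0 < g i2" "g i2 < 1"
    and "i1 \<noteq> i2" using p1 p2 disj p by auto
  have mk: "(a = Some i1) \<longrightarrow> i1 \<in> U" "(a = Some i2) \<longrightarrow> i2 \<in> U"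
    "\<not> (a = Some i1 \<and> a = Some i2)" using marked \<open>i1 \<noteq> i2\<close> by auto
  note mix = potential_mix[OF fin i1(1) i2(1) \<open>i1 \<noteq> i2\<close> g01 c]
  show ?thesis
  proof (cases "g i1 + g i2 \<le> 1")
    case True
    then show ?thesis
      using mix[OF _ _ _ _ _ _ pot_factor_mix_merge[OF i1(2) i2(2) c(1) mk]] i1 i2 p
      by (simp add: Let_def)
  next
    case False
    have "(1 - g i2) / (2 - (g i1 + g i2)) \<le> 1" using i1 i2 False by (simp add: divide_le_eq)
    then show ?thesis
      using mix[OF _ _ _ _ _ _ pot_factor_mix_split[OF i1(2) i2(2) i1(3) i2(3) _ c(1) mk]] i1 i2 p False
      by (simp add: Let_def)
  qed
qed

lemma potential_union_if:
  assumes "A \<inter> B = {}" "finite A" "finite B"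
  shows "potential a U c (A \<union> B) (\<lambda>i. if i \<in> A then f1 i else f2 i) = potential a U c A f1 * potential a U c B f2"
  unfolding potential_def using assms
  by (simp add: prod.union_disjoint) (auto intro!: arg_cong2[where f = "(*)"] prod.cong)

lemma nn_integral_dr_potential:
  assumes "distinct (leaves T)" "\<forall>i\<in>set (leaves T). 0 \<le> y i \<and> y i \<le> 1"
    and c: "0 \<le> c" "c \<le> 1" and marked: "set_option a \<subseteq> U"
  shows "(\<integral>\<^sup>+z. ennreal (potential a U c (set (leaves T)) (fst z)) \<partial>dr y T)
          \<le> ennreal (potential a U c (set (leaves T)) y)"
  using assms(1,2)
proof (induction T)
  case (Leaf i)
  then show ?case by (simp add: potential_def)
next
  case (Node l r)
  let ?A = "set (leaves l)" and ?B = "set (leaves r)" and ?pot = "potential a U c"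
  have disj: "?A \<inter> ?B = {}" using Node.prems(1) by auto
  note split = potential_union_if[OF disj finite_set finite_set, of a U c]
  have step: "(\<integral>\<^sup>+z. ennreal (?pot (?A \<union> ?B) (fst z))
        \<partial>dr_step (\<lambda>i. if i \<in> ?A then f1 i else f2 i) p1 p2)
      \<le> ennreal (?pot ?A f1) * ennreal (?pot ?B f2)"
    if "(f1, p1) \<in> set_pmf (dr y l)" "(f2, p2) \<in> set_pmf (dr y r)" for f1 p1 f2 p2
  proof -
    have I1: "dr_invariant y ?A f1 p1" and I2: "dr_invariant y ?B f2 p2"
      using dr_invariant_dr that Node.prems by auto
    have "0 \<le> ?pot ?A f1" using I1 c by (intro potential_nonneg) (auto simp: dr_invariant_def)
    then have "ennreal (?pot ?A f1) * ennreal (?pot ?B f2) = ennreal (?pot (?A \<union> ?B) (\<lambda>i. if i \<in> ?A then f1 i else f2 i))"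
      by (simp add: split ennreal_mult')
    moreover have "(\<integral>\<^sup>+z. ennreal (?pot (?A \<union> ?B) (fst z))
        \<partial>dr_step (\<lambda>i. if i \<in> ?A then f1 i else f2 i) p1 p2)
      \<le> ennreal (?pot (?A \<union> ?B) (\<lambda>i. if i \<in> ?A then f1 i else f2 i))"
      using I1 I2 disj c marked
      by (intro nn_integral_dr_step_potential) (auto simp: dr_invariant_def)
    ultimately show ?thesis by simp
  qed
  have "(\<integral>\<^sup>+z. ennreal (?pot (set (leaves (Node l r))) (fst z)) \<partial>dr y (Node l r))
      \<le> (\<integral>\<^sup>+z1. \<integral>\<^sup>+z2. ennreal (?pot ?A (fst z1)) * ennreal (?pot ?B (fst z2)) \<partial>dr y r \<partial>dr y l)"
    by (auto simp: split_beta intro!: nn_integral_mono_AE AE_pmfI step)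
  also have "\<dots> = (\<integral>\<^sup>+z1. ennreal (?pot ?A (fst z1)) \<partial>dr y l) * (\<integral>\<^sup>+z2. ennreal (?pot ?B (fst z2)) \<partial>dr y r)"
    by (simp add: nn_integral_cmult nn_integral_multc)
  also have "\<dots> \<le> ennreal (?pot ?A y) * ennreal (?pot ?B y)"
    using Node.IH Node.prems by (intro mult_mono) auto
  also have "\<dots> = ennreal (?pot (set (leaves (Node l r))) y)"
    using split[of y y] Node.prems c by (simp add: ennreal_mult' potential_nonneg)
  finally show ?case .
qed

lemma nn_integral_Y_dist_potential:
  assumes "distinct (leaves T)" "set (leaves T) = {1..m}" "\<forall>i\<in>{1..m}. 0 \<le> y i \<and> y i \<le> 1"
    and "0 \<le> c" "c \<le> 1" "set_option a \<subseteq> U"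
  shows "(\<integral>\<^sup>+Y. ennreal (potential a U c {1..m} Y) \<partial>Y_dist y T) \<le> ennreal (potential a U c {1..m} y)"
  using nn_integral_dr_potential[of T y c a U] assms by (simp add: Y_dist_def)

lemma potential_Some:
  assumes "finite L" "a \<in> U" "U \<subseteq> L"
  shows "potential (Some a) U c L f = f a * (\<Prod>i\<in>U. 1 - c * f i)"
proof -
  have "potential (Some a) U c L f
      = (\<Prod>i\<in>L. if i = a then f i else 1) * (\<Prod>i\<in>L. if i \<in> U then 1 - c * f i else 1)"
    unfolding potential_def pot_factor_def by (simp add: prod.distrib eq_commute)
  also have "\<dots> = f a * (\<Prod>i\<in>L \<inter> U. 1 - c * f i)"
    using assms subsetD[OF assms(3,2)] by (simp add: prod.If_cases prod.delta)
  finally show ?thesis using assms(3) by (simp add: Int_absorb1)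
qed

lemma potential_None_singleton:
  assumes "finite L" "i \<in> L"
  shows "potential None {i} 1 L f = 1 - f i"
  using assms unfolding potential_def pot_factor_def by (simp add: prod.delta')

lemma prob_Y_dist_ge:
  assumes tree: "distinct (leaves T)" "set (leaves T) = {1..m}"
    and y01: "\<forall>i\<in>{1..m}. 0 \<le> y i \<and> y i \<le> 1" and ysum: "(\<Sum>i=1..m. y i) = real k"
    and i: "i \<in> {1..m}"
  shows "y i \<le> measure_pmf.prob (Y_dist y T) {Y. Y i = 1}"
proof -
  have "(\<integral>\<^sup>+Y. ennreal (1 - Y i) \<partial>Y_dist y T) \<le> ennreal (1 - y i)"
    using nn_integral_Y_dist_potential[OF tree y01, of 1 None "{i}"] i
    by (simp add: potential_None_singleton)
  moreover have "(\<integral>\<^sup>+Y. ennreal (1 - Y i) \<partial>Y_dist y T) = (\<integral>\<^sup>+Y. indicator {Y. Y i \<noteq> 1} Y \<partial>Y_dist y T)"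
  proof (intro nn_integral_cong_AE AE_pmfI)
    fix Y assume "Y \<in> set_pmf (Y_dist y T)"
    then have "Y i = 0 \<or> Y i = 1" by (rule set_pmf_Y_dist(1)[OF tree y01 ysum _ i])
    then show "ennreal (1 - Y i) = indicator {Y. Y i \<noteq> 1} Y" by auto
  qed
  moreover have "measure_pmf.prob (Y_dist y T) {Y. Y i \<noteq> 1} = 1 - measure_pmf.prob (Y_dist y T) {Y. Y i = 1}"
  proof -
    have "{Y. Y i \<noteq> 1} = space (measure_pmf (Y_dist y T)) - {Y. Y i = 1}" by auto
    then show ?thesis using measure_pmf.prob_compl[of "{Y. Y i = 1}" "Y_dist y T"] by simp
  qed
  ultimately have "ennreal (1 - measure_pmf.prob (Y_dist y T) {Y. Y i = 1}) \<le> ennreal (1 - y i)"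
    by (simp add: measure_pmf.emeasure_eq_measure)
  then show ?thesis using y01 i by (simp add: ennreal_le_iff)
qed

lemma nn_integral_Y_dist_neg_corr:
  assumes "distinct (leaves T)" "set (leaves T) = {1..m}" "\<forall>i\<in>{1..m}. 0 \<le> y i \<and> y i \<le> 1"
    and "a \<in> U" "U \<subseteq> {1..m}" "0 \<le> c" "c \<le> 1"
  shows "(\<integral>\<^sup>+Y. ennreal (Y a * (\<Prod>i\<in>U. 1 - c * Y i)) \<partial>Y_dist y T)
           \<le> ennreal (y a * (\<Prod>i\<in>U. 1 - c * y i))"
  using nn_integral_Y_dist_potential[OF assms(1-3,6,7), of "Some a" U] assms(4,5)
  by (simp add: potential_Some)

section \<open>Chernoff-type estimates\<close>

lemma chernoff_indicator_le:
  fixes Y :: "'a \<Rightarrow> real" and \<theta> :: real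
  assumes "finite U" "a \<in> U" "\<forall>i\<in>U. Y i = 0 \<or> Y i = 1" "Y a = 1"
    and "card {i\<in>U. Y i = 1} \<le> t" "0 < \<theta>" "\<theta> \<le> 1"
  shows "1 \<le> (1 / \<theta>) ^ t * (Y a * (\<Prod>i\<in>U. 1 - (1 - \<theta>) * Y i))"
proof -
  have "(\<Prod>i\<in>U. 1 - (1 - \<theta>) * Y i) = (\<Prod>i\<in>U. if Y i = 1 then \<theta> else 1)"
    using assms(3) by (intro prod.cong) auto
  also have "\<dots> = \<theta> ^ card {i\<in>U. Y i = 1}"
    using assms(1) by (simp add: prod.If_cases Int_def)
  finally have "(1 / \<theta>) ^ t * (Y a * (\<Prod>i\<in>U. 1 - (1 - \<theta>) * Y i)) = (1 / \<theta>) ^ t * \<theta> ^ card {i\<in>U. Y i = 1}"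
    using assms(4) by simp
  also have "\<dots> \<ge> (1 / \<theta>) ^ t * \<theta> ^ t"
    using assms(5-7) by (intro mult_left_mono power_decreasing) auto
  finally show ?thesis using assms(6) by (simp add: power_one_over)
qed

lemma chernoff_mean_le:
  fixes y :: "'a \<Rightarrow> real" and \<mu> :: real
  assumes "finite U" "\<forall>i\<in>U. 0 \<le> y i \<and> y i \<le> 1" "0 < t" "real t < \<mu>" "\<mu> \<le> sum y U"
  shows "(\<mu> / t) ^ t * (\<Prod>i\<in>U. 1 - (1 - t / \<mu>) * y i) \<le> exp (- \<mu>) * (exp 1 * \<mu> / t) ^ t"
proof -
  define c where "c = 1 - t / \<mu>"
  have \<mu>: "0 < \<mu>" using assms(3,4) by linarith
  have c: "0 \<le> c" "c \<le> 1" using assms(3,4) \<mu> unfolding c_def by auto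
  have "(\<Prod>i\<in>U. 1 - c * y i) \<le> (\<Prod>i\<in>U. exp (- (c * y i)))"
  proof (rule prod_mono)
    fix i assume "i \<in> U"
    then have "c * y i \<le> 1" using assms(2) c mult_mono[of c 1 "y i" 1] by simp
    then show "0 \<le> 1 - c * y i \<and> 1 - c * y i \<le> exp (- (c * y i))"
      using exp_ge_add_one_self[of "- (c * y i)"] by simp
  qed
  also have "\<dots> = exp (- (c * sum y U))"
    using assms(1) by (simp add: exp_sum[symmetric] sum_negf sum_distrib_left)
  also have "\<dots> \<le> exp (- (c * \<mu>))" using assms(5) c by (simp add: mult_left_mono)
  also have "c * \<mu> = \<mu> - t" using \<mu> unfolding c_def by (simp add: field_simps)
  finally have "(\<mu> / t) ^ t * (\<Prod>i\<in>U. 1 - c * y i) \<le> (\<mu> / t) ^ t * exp (t - \<mu>)"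
    using \<mu> by (intro mult_left_mono) auto
  also have "\<dots> = exp (- \<mu>) * (exp 1 * \<mu> / t) ^ t"
    by (simp add: exp_diff exp_minus exp_of_nat_mult[symmetric] power_mult_distrib field_simps)
  finally show ?thesis unfolding c_def .
qed

lemma Y_dist_prefix_indicator_le:
  assumes tree: "distinct (leaves T)" "set (leaves T) = {1..m}"
    and y01: "\<forall>i\<in>{1..m}. 0 \<le> y i \<and> y i \<le> 1" and ysum: "(\<Sum>i=1..m. y i) = real k"
    and \<sigma>: "\<sigma> ` {1..m} \<subseteq> {1..m}" and P: "P \<in> {1..m}" and Y: "Y \<in> set_pmf (Y_dist y T)"
    and event: "Y (\<sigma> P) = 1" "card {q\<in>{1..m}. Y (\<sigma> q) = 1 \<and> q < P} \<le> t - 1"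
    and t: "1 \<le> t" and \<theta>: "0 < \<theta>" "\<theta> \<le> 1"
  shows "1 \<le> (1 / \<theta>) ^ t * (Y (\<sigma> P) * (\<Prod>q\<in>{1..P}. 1 - (1 - \<theta>) * Y (\<sigma> q)))"
proof (rule chernoff_indicator_le[of "{1..P}" P "\<lambda>q. Y (\<sigma> q)"])
  show "\<forall>q\<in>{1..P}. Y (\<sigma> q) = 0 \<or> Y (\<sigma> q) = 1"
    using set_pmf_Y_dist(1)[OF tree y01 ysum Y] \<sigma> P by (force simp: image_subset_iff)
  have "{q\<in>{1..P}. Y (\<sigma> q) = 1} = insert P {q\<in>{1..m}. Y (\<sigma> q) = 1 \<and> q < P}"
    using P event(1) by auto
  then have "card {q\<in>{1..P}. Y (\<sigma> q) = 1} = Suc (card {q\<in>{1..m}. Y (\<sigma> q) = 1 \<and> q < P})"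
    by (simp add: card_insert_disjoint)
  then show "card {q\<in>{1..P}. Y (\<sigma> q) = 1} \<le> t" using event(2) t by linarith
qed (use P event(1) \<theta> in auto)

lemma nn_integral_Y_dist_prefix_neg_corr:
  assumes tree: "distinct (leaves T)" "set (leaves T) = {1..m}"
    and y01: "\<forall>i\<in>{1..m}. 0 \<le> y i \<and> y i \<le> 1"
    and \<sigma>: "bij_betw \<sigma> {1..m} {1..m}" and P: "P \<in> {1..m}" and c: "0 \<le> c" "c \<le> 1"
  shows "(\<integral>\<^sup>+Y. ennreal (Y (\<sigma> P) * (\<Prod>q\<in>{1..P}. 1 - c * Y (\<sigma> q))) \<partial>Y_dist y T)
           \<le> ennreal (y (\<sigma> P) * (\<Prod>q\<in>{1..P}. 1 - c * y (\<sigma> q)))"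
proof -
  have "inj_on \<sigma> {1..P}" using \<sigma> P by (auto simp: bij_betw_def intro: inj_on_subset)
  then have "(\<Prod>i\<in>\<sigma> ` {1..P}. 1 - c * f i) = (\<Prod>q\<in>{1..P}. 1 - c * f (\<sigma> q))" for f :: "nat \<Rightarrow> real"
    by (simp add: prod.reindex)
  moreover have "\<sigma> ` {1..P} \<subseteq> {1..m}" using \<sigma> P by (auto simp: bij_betw_def)
  ultimately show ?thesis
    using nn_integral_Y_dist_neg_corr[OF tree y01, of "\<sigma> P" "\<sigma> ` {1..P}" c] c P by simp
qed

lemma emeasure_Y_dist_chernoff:
  assumes tree: "distinct (leaves T)" "set (leaves T) = {1..m}"
    and y01: "\<forall>i\<in>{1..m}. 0 \<le> y i \<and> y i \<le> 1" and ysum: "(\<Sum>i=1..m. y i) = real k"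
    and \<sigma>: "bij_betw \<sigma> {1..m} {1..m}" and P: "P \<in> {1..m}"
    and t: "1 \<le> t" "real t < \<mu>" and \<mu>: "\<mu> \<le> (\<Sum>q=1..P. y (\<sigma> q))"
  shows "emeasure (Y_dist y T) {Y. Y (\<sigma> P) = 1 \<and> card {q\<in>{1..m}. Y (\<sigma> q) = 1 \<and> q < P} \<le> t - 1}
         \<le> ennreal (exp (- \<mu>) * (exp 1 * \<mu> / t) ^ t) * emeasure (Y_dist y T) {Y. Y (\<sigma> P) = 1}"
proof -
  define B where "B = exp (- \<mu>) * (exp 1 * \<mu> / t) ^ t"
  define X where "X Y = Y (\<sigma> P) * (\<Prod>q\<in>{1..P}. 1 - (1 - t / \<mu>) * Y (\<sigma> q))" for Y :: "nat \<Rightarrow> real"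
  have \<sigma>q: "\<sigma> q \<in> {1..m}" if "q \<in> {1..m}" for q using \<sigma> that by (rule bij_betw_apply)
  have \<mu>_pos: "0 < \<mu>" using t(2) of_nat_0_le_iff[of t] by linarith
  have \<theta>: "0 < t / \<mu>" "t / \<mu> \<le> 1" using t by auto
  have indicator_le: "indicator {Y. Y (\<sigma> P) = 1 \<and> card {q\<in>{1..m}. Y (\<sigma> q) = 1 \<and> q < P} \<le> t - 1} Y
      \<le> ennreal ((\<mu> / t) ^ t) * ennreal (X Y)" if "Y \<in> set_pmf (Y_dist y T)" for Y
    using Y_dist_prefix_indicator_le[OF tree y01 ysum _ P that _ _ t(1) \<theta>] \<sigma> \<mu>_pos
    by (auto simp: bij_betw_def X_def ennreal_mult'[symmetric] ennreal_leI indicator_def)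
  have mean: "(\<mu> / t) ^ t * X y \<le> B * y (\<sigma> P)"
  proof -
    have "\<forall>q\<in>{1..P}. 0 \<le> y (\<sigma> q) \<and> y (\<sigma> q) \<le> 1" using y01 \<sigma>q P by auto
    from chernoff_mean_le[of "{1..P}" "\<lambda>q. y (\<sigma> q)", OF _ this _ t(2) \<mu>] t
    have "(\<mu> / t) ^ t * (\<Prod>q\<in>{1..P}. 1 - (1 - t / \<mu>) * y (\<sigma> q)) \<le> B" unfolding B_def by simp
    moreover have "0 \<le> y (\<sigma> P)" using y01 \<sigma>q P by auto
    ultimately show ?thesis unfolding X_def by (metis mult.commute mult.left_commute mult_right_mono)
  qed
  have "emeasure (Y_dist y T) {Y. Y (\<sigma> P) = 1 \<and> card {q\<in>{1..m}. Y (\<sigma> q) = 1 \<and> q < P} \<le> t - 1}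
      = (\<integral>\<^sup>+Y. indicator {Y. Y (\<sigma> P) = 1 \<and> card {q\<in>{1..m}. Y (\<sigma> q) = 1 \<and> q < P} \<le> t - 1} Y
          \<partial>Y_dist y T)"
    by simp
  also have "\<dots> \<le> (\<integral>\<^sup>+Y. ennreal ((\<mu> / t) ^ t) * ennreal (X Y) \<partial>Y_dist y T)"
    by (intro nn_integral_mono_AE AE_pmfI indicator_le)
  also have "\<dots> = ennreal ((\<mu> / t) ^ t) * (\<integral>\<^sup>+Y. ennreal (X Y) \<partial>Y_dist y T)"
    by (rule nn_integral_cmult) simp
  also have "\<dots> \<le> ennreal ((\<mu> / t) ^ t * X y)"
    using mult_left_mono[OF nn_integral_Y_dist_prefix_neg_corr[OF tree y01 \<sigma> P, of "1 - t / \<mu>"]] \<theta> \<mu>_pos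
    by (simp add: X_def ennreal_mult')
  also have "\<dots> \<le> ennreal (B * measure_pmf.prob (Y_dist y T) {Y. Y (\<sigma> P) = 1})"
    using order_trans[OF mean mult_left_mono[OF prob_Y_dist_ge[OF tree y01 ysum \<sigma>q[OF P]]]] \<mu>_pos
    by (intro ennreal_leI) (simp add: B_def)
  finally show ?thesis
    unfolding B_def using \<mu>_pos by (simp add: measure_pmf.emeasure_eq_measure ennreal_mult')
qed

section \<open>The blocks sub(p) and the variables Z_r\<close>

definition blocks_ordered :: "nat set \<Rightarrow> (nat \<Rightarrow> nat set) \<Rightarrow> bool" where
  "blocks_ordered I B \<longleftrightarrow> (\<forall>q\<in>I. \<forall>q'\<in>I. q < q' \<longrightarrow> (\<forall>x\<in>B q. \<forall>x'\<in>B q'. x < x'))"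

lemma mem_image_ordered_choice:
  fixes B :: "nat \<Rightarrow> nat set"
  assumes ordered: "blocks_ordered I B"
    and "Op \<subseteq> I" "\<forall>q\<in>Op. ch q \<in> B q" "P \<in> I" "r \<in> B P"
  shows "r \<in> ch ` Op \<longleftrightarrow> P \<in> Op \<and> ch P = r"
proof
  assume "r \<in> ch ` Op"
  then obtain q where q: "q \<in> Op" "ch q = r" by blast
  have "q = P"
    using ordered q assms(2-5) unfolding blocks_ordered_def by (cases q P rule: linorder_cases) blast+
  with q show "P \<in> Op \<and> ch P = r" by simp
qed auto

lemma card_image_ordered_choice_less:
  fixes B :: "nat \<Rightarrow> nat set"
  assumes ordered: "blocks_ordered I B"
    and Op: "Op \<subseteq> I" "\<forall>q\<in>Op. ch q \<in> B q" "P \<in> Op" and pos: "\<forall>q\<in>Op. 0 < ch q"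
  shows "card (ch ` Op \<inter> {1..<ch P}) = card {q\<in>Op. q < P}"
proof -
  have mono: "ch q < ch q'" if "q \<in> Op" "q' \<in> Op" "q < q'" for q q'
    using ordered that Op unfolding blocks_ordered_def by blast
  have less_iff: "ch q < ch q' \<longleftrightarrow> q < q'" if "q \<in> Op" "q' \<in> Op" for q q'
    using mono[of q q'] mono[of q' q] that by (cases q q' rule: linorder_cases) auto
  have "ch ` Op \<inter> {1..<ch P} = ch ` {q\<in>Op. q < P}"
    using less_iff Op(3) pos by (auto simp: Suc_le_eq)
  moreover have "inj_on ch {q\<in>Op. q < P}"
  proof (rule inj_onI)
    fix q q' assume "q \<in> {q\<in>Op. q < P}" "q' \<in> {q\<in>Op. q < P}" "ch q = ch q'"
    then show "q = q'" using less_iff[of q q'] less_iff[of q' q] by (cases q q' rule: linorder_cases) auto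
  qed
  ultimately show ?thesis by (simp add: card_image)
qed

lemma emeasure_Pi_pmf_ordered_choice:
  fixes B :: "nat \<Rightarrow> nat set"
  assumes fin: "finite Op" and Op: "Op \<subseteq> I" and blocks: "\<And>q. q \<in> Op \<Longrightarrow> finite (B q) \<and> B q \<noteq> {}"
    and ordered: "blocks_ordered I B"
    and pos: "\<forall>q\<in>I. \<forall>x\<in>B q. 0 < x" and P: "P \<in> I" "r \<in> B P"
  shows "emeasure (map_pmf (\<lambda>ch. ch ` Op) (Pi_pmf Op d (\<lambda>q. pmf_of_set (B q))))
           {S. Q (card (S \<inter> {1..<r})) \<and> r \<in> S}
       = (if P \<in> Op \<and> Q (card {q\<in>Op. q < P}) then emeasure (pmf_of_set (B P)) {r} else 0)"
proof -
  define Pi where "Pi = Pi_pmf Op d (\<lambda>q. pmf_of_set (B q))"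
  define cond where "cond = (P \<in> Op \<and> Q (card {q\<in>Op. q < P}))"
  have choice: "\<forall>q\<in>Op. ch q \<in> B q" if "ch \<in> set_pmf Pi" for ch
    using that blocks unfolding Pi_def set_Pi_pmf[OF fin] by (auto simp: PiE_dflt_def)
  have event: "ch ` Op \<in> {S. Q (card (S \<inter> {1..<r})) \<and> r \<in> S} \<longleftrightarrow> cond \<and> ch P = r"
    if "ch \<in> set_pmf Pi" for ch
  proof -
    note ch = choice[OF that]
    have "P \<in> Op \<Longrightarrow> card (ch ` Op \<inter> {1..<ch P}) = card {q\<in>Op. q < P}"
      using card_image_ordered_choice_less[OF ordered Op ch] pos ch Op by auto
    then show ?thesis
      using mem_image_ordered_choice[OF ordered Op ch P] unfolding cond_def by auto
  qed
  have "emeasure (map_pmf (\<lambda>ch. ch ` Op) Pi) {S. Q (card (S \<inter> {1..<r})) \<and> r \<in> S}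
      = emeasure Pi ((\<lambda>ch. ch ` Op) -` {S. Q (card (S \<inter> {1..<r})) \<and> r \<in> S} \<inter> set_pmf Pi)"
    by (simp add: emeasure_Int_set_pmf)
  also have "(\<lambda>ch. ch ` Op) -` {S. Q (card (S \<inter> {1..<r})) \<and> r \<in> S} \<inter> set_pmf Pi
      = (if cond then {ch. ch P = r} else {}) \<inter> set_pmf Pi"
    using event by auto
  also have "emeasure Pi \<dots> = (if cond then emeasure (map_pmf (\<lambda>ch. ch P) Pi) {r} else 0)"
    by (simp add: emeasure_Int_set_pmf vimage_def)
  also have "\<dots> = (if cond then emeasure (pmf_of_set (B P)) {r} else 0)"
    unfolding Pi_def cond_def by (simp add: Pi_pmf_component[OF fin])
  finally show ?thesis unfolding Pi_def cond_def .
qed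

lemma submax_mono:
  assumes "\<forall>q\<in>{1..m}. 0 \<le> y (\<sigma> q)" "0 < \<epsilon>" "p \<le> p'" "p' \<le> m"
  shows "submax y \<sigma> \<epsilon> p \<le> submax y \<sigma> \<epsilon> p'"
  unfolding submax_def using assms by (intro sum_mono2) auto

lemma submax_of_nat:
  assumes "\<forall>q\<in>{1..m}. \<exists>n::nat. y (\<sigma> q) / \<epsilon> = real n" "p \<le> m"
  obtains n :: nat where "submax y \<sigma> \<epsilon> p = real n"
proof -
  obtain n where "\<forall>q\<in>{1..m}. y (\<sigma> q) / \<epsilon> = real (n q)" using assms(1) by metis
  then have "submax y \<sigma> \<epsilon> p = real (\<Sum>q=1..p. n q)"
    unfolding submax_def using assms(2) by (simp add: of_nat_sum)
  then show ?thesis using that by blast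
qed

lemma blocks_ordered_sub_blk:
  assumes "\<forall>q\<in>{1..m}. 0 \<le> y (\<sigma> q)" "0 < \<epsilon>"
  shows "blocks_ordered {1..m} (sub_blk y \<sigma> \<epsilon>)"
  unfolding blocks_ordered_def
proof (intro ballI impI)
  fix q q' r1 r2 assume "q \<in> {1..m}" "q' \<in> {1..m}" "q < q'"
    and r: "r1 \<in> sub_blk y \<sigma> \<epsilon> q" "r2 \<in> sub_blk y \<sigma> \<epsilon> q'"
  then have "submax y \<sigma> \<epsilon> q \<le> submax y \<sigma> \<epsilon> (q' - 1)"
    using assms by (intro submax_mono[where m = m]) auto
  then show "r1 < r2" using r by (simp add: sub_blk_def)
qed

lemma mem_sub_blk_pos:
  assumes "\<forall>q\<in>{1..m}. 0 \<le> y (\<sigma> q)" "0 < \<epsilon>" "q \<le> m" "r \<in> sub_blk y \<sigma> \<epsilon> q"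
  shows "0 < r"
proof -
  have "submax y \<sigma> \<epsilon> 0 \<le> submax y \<sigma> \<epsilon> (q - 1)"
    using assms by (intro submax_mono[where m = m]) auto
  then show ?thesis using assms(4) by (simp add: sub_blk_def submax_def)
qed

lemma finite_sub_blk: "finite (sub_blk y \<sigma> \<epsilon> q)"
proof (rule finite_subset)
  show "sub_blk y \<sigma> \<epsilon> q \<subseteq> {..nat \<lceil>submax y \<sigma> \<epsilon> q\<rceil>}"
    by (auto simp: sub_blk_def le_nat_iff) (metis ceiling_mono ceiling_of_nat)
qed simp

lemma sub_blk_nonempty:
  assumes "\<forall>q\<in>{1..m}. \<exists>n::nat. y (\<sigma> q) / \<epsilon> = real n" "q \<in> {1..m}" "0 < y (\<sigma> q)" "0 < \<epsilon>"
  shows "sub_blk y \<sigma> \<epsilon> q \<noteq> {}"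
proof -
  obtain n :: nat where n: "submax y \<sigma> \<epsilon> q = real n"
    using submax_of_nat[of m y \<sigma> \<epsilon> q] assms(1,2) by auto
  have "submax y \<sigma> \<epsilon> q = submax y \<sigma> \<epsilon> (q - 1) + y (\<sigma> q) / \<epsilon>"
    using assms(2) by (cases q) (auto simp: submax_def)
  moreover have "0 < y (\<sigma> q) / \<epsilon>" using assms(3,4) by simp
  ultimately have "n \<in> sub_blk y \<sigma> \<epsilon> q" using n by (simp only: sub_blk_def mem_Collect_eq) linarith
  then show ?thesis by blast
qed

lemma ex_mem_sub_blk:
  assumes "1 \<le> r" "real r \<le> submax y \<sigma> \<epsilon> m"
  obtains P where "P \<in> {1..m}" "r \<in> sub_blk y \<sigma> \<epsilon> P"
proof -
  define P where "P = (LEAST p. real r \<le> submax y \<sigma> \<epsilon> p)"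
  have r_le: "real r \<le> submax y \<sigma> \<epsilon> P" unfolding P_def using assms(2) by (rule LeastI)
  have "P \<le> m" unfolding P_def using assms(2) by (rule Least_le)
  moreover have "P \<noteq> 0" using r_le assms(1) by (cases P) (auto simp: submax_def)
  moreover have "\<not> real r \<le> submax y \<sigma> \<epsilon> (P - 1)"
    unfolding P_def by (rule not_less_Least) (use \<open>P \<noteq> 0\<close> P_def in simp)
  ultimately show ?thesis using r_le by (intro that[of P]) (auto simp: sub_blk_def)
qed

lemma submax_eq_sum:
  assumes "bij_betw \<sigma> {1..m} {1..m}"
  shows "submax y \<sigma> \<epsilon> m = (\<Sum>i=1..m. y i) / \<epsilon>"
  unfolding submax_def using sum.reindex_bij_betw[OF assms, of y] by (simp add: sum_divide_distrib[symmetric])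

lemma emeasure_Z_dist:
  assumes tree: "distinct (leaves T)" "set (leaves T) = {1..m}"
    and y01: "\<forall>i\<in>{1..m}. 0 \<le> y i \<and> y i \<le> 1" and ysum: "(\<Sum>i=1..m. y i) = real k"
    and \<sigma>: "\<sigma> ` {1..m} \<subseteq> {1..m}" and \<epsilon>: "0 < \<epsilon>"
    and yint: "\<forall>i\<in>{1..m}. \<exists>n::nat. y i / \<epsilon> = real n"
    and P: "P \<in> {1..m}" "r \<in> sub_blk y \<sigma> \<epsilon> P"
  shows "emeasure (Z_dist m y T \<sigma> \<epsilon>) {S. Q (card (S \<inter> {1..<r})) \<and> r \<in> S}
       = (\<integral>\<^sup>+Y. (if Y (\<sigma> P) = 1 \<and> Q (card {q\<in>{1..m}. Y (\<sigma> q) = 1 \<and> q < P})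
                 then emeasure (pmf_of_set (sub_blk y \<sigma> \<epsilon> P)) {r} else 0) \<partial>Y_dist y T)"
  unfolding Z_dist_def emeasure_bind_pmf
proof (intro nn_integral_cong_AE AE_pmfI)
  fix Y assume Y: "Y \<in> set_pmf (Y_dist y T)"
  let ?Op = "{p\<in>{1..m}. Y (\<sigma> p) = 1}"
  have \<sigma>q: "\<sigma> q \<in> {1..m}" if "q \<in> {1..m}" for q using \<sigma> that by blast
  have ynn: "\<forall>q\<in>{1..m}. 0 \<le> y (\<sigma> q)" using y01 \<sigma>q by blast
  have yint\<sigma>: "\<forall>q\<in>{1..m}. \<exists>n::nat. y (\<sigma> q) / \<epsilon> = real n" using yint \<sigma>q by blast
  have blocks: "finite (sub_blk y \<sigma> \<epsilon> q) \<and> sub_blk y \<sigma> \<epsilon> q \<noteq> {}" if "q \<in> ?Op" for q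
  proof -
    have "0 < y (\<sigma> q)"
      using that set_pmf_Y_dist(2)[OF tree y01 ysum Y \<sigma>q] ynn by force
    then show ?thesis
      using that sub_blk_nonempty[of m y \<sigma> \<epsilon> q] yint\<sigma> \<epsilon> by (auto simp: finite_sub_blk)
  qed
  have "emeasure (map_pmf (\<lambda>ch. ch ` ?Op) (Pi_pmf ?Op 0 (\<lambda>p. pmf_of_set (sub_blk y \<sigma> \<epsilon> p))))
      {S. Q (card (S \<inter> {1..<r})) \<and> r \<in> S}
    = (if P \<in> ?Op \<and> Q (card {q\<in>?Op. q < P}) then emeasure (pmf_of_set (sub_blk y \<sigma> \<epsilon> P)) {r} else 0)"
  proof (rule emeasure_Pi_pmf_ordered_choice[OF _ _ blocks])
    show "blocks_ordered {1..m} (sub_blk y \<sigma> \<epsilon>)"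
      by (rule blocks_ordered_sub_blk[of m y \<sigma> \<epsilon>, OF ynn \<epsilon>])
    show "\<forall>q\<in>{1..m}. \<forall>x\<in>sub_blk y \<sigma> \<epsilon> q. 0 < x"
      using mem_sub_blk_pos[of m y \<sigma> \<epsilon>, OF ynn \<epsilon>] by auto
  qed (use P in auto)
  moreover have "{q\<in>?Op. q < P} = {q\<in>{1..m}. Y (\<sigma> q) = 1 \<and> q < P}" by auto
  ultimately show "emeasure (map_pmf (\<lambda>ch. ch ` ?Op) (Pi_pmf ?Op 0 (\<lambda>p. pmf_of_set (sub_blk y \<sigma> \<epsilon> p))))
      {S. Q (card (S \<inter> {1..<r})) \<and> r \<in> S}
    = (if Y (\<sigma> P) = 1 \<and> Q (card {q\<in>{1..m}. Y (\<sigma> q) = 1 \<and> q < P})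
       then emeasure (pmf_of_set (sub_blk y \<sigma> \<epsilon> P)) {r} else 0)"
    using P(1) by simp
qed

lemma H_le_chernoff:
  assumes tree: "distinct (leaves T)" "set (leaves T) = {1..m}"
    and y01: "\<forall>i\<in>{1..m}. 0 \<le> y i \<and> y i \<le> 1" and ysum: "(\<Sum>i=1..m. y i) = real k"
    and \<sigma>: "bij_betw \<sigma> {1..m} {1..m}" and \<epsilon>: "0 < \<epsilon>"
    and yint: "\<forall>i\<in>{1..m}. \<exists>n::nat. y i / \<epsilon> = real n"
    and P: "P \<in> {1..m}" "r \<in> sub_blk y \<sigma> \<epsilon> P"
    and t: "1 \<le> t" "real t < real r * \<epsilon>"
  shows "H m y T \<sigma> \<epsilon> r (t - 1) \<le> exp (- real r * \<epsilon>) * (exp 1 * real r * \<epsilon> / real t) ^ t"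
proof -
  define B where "B = exp (- (real r * \<epsilon>)) * (exp 1 * (real r * \<epsilon>) / t) ^ t"
  \<comment> \<open>the probability that position P picks r; it cancels in the quotient\<close>
  define \<kappa> where "\<kappa> = emeasure (pmf_of_set (sub_blk y \<sigma> \<epsilon> P)) {r}"
  define A :: "(nat \<Rightarrow> real) set" where "A = {Y. Y (\<sigma> P) = 1 \<and> card {q\<in>{1..m}. Y (\<sigma> q) = 1 \<and> q < P} \<le> t - 1}"
  have \<sigma>_sub: "\<sigma> ` {1..m} \<subseteq> {1..m}" using \<sigma> by (simp add: bij_betw_def)
  note Z = emeasure_Z_dist[OF tree y01 ysum \<sigma>_sub \<epsilon> yint P]
  have integral_if: "(\<integral>\<^sup>+Y. (if Y \<in> S then \<kappa> else 0) \<partial>Y_dist y T) = emeasure (Y_dist y T) S * \<kappa>" for S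
  proof -
    have "(\<integral>\<^sup>+Y. (if Y \<in> S then \<kappa> else 0) \<partial>Y_dist y T) = (\<integral>\<^sup>+Y. indicator S Y * \<kappa> \<partial>Y_dist y T)"
      by (intro nn_integral_cong) (simp add: indicator_def)
    then show ?thesis by (simp add: nn_integral_multc)
  qed
  have "real r * \<epsilon> \<le> (\<Sum>q=1..P. y (\<sigma> q))"
    using P(2) \<epsilon> by (simp add: sub_blk_def submax_def sum_divide_distrib[symmetric] pos_le_divide_eq)
  then have "emeasure (Y_dist y T) A * \<kappa> \<le> ennreal B * emeasure (Y_dist y T) {Y. Y (\<sigma> P) = 1} * \<kappa>"
    using emeasure_Y_dist_chernoff[OF tree y01 ysum \<sigma> P(1) t] unfolding A_def B_def
    by (intro mult_right_mono) auto
  then have "emeasure (Z_dist m y T \<sigma> \<epsilon>) {S. card (S \<inter> {1..<r}) \<le> t - 1 \<and> r \<in> S}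
      \<le> ennreal B * emeasure (Z_dist m y T \<sigma> \<epsilon>) {S. r \<in> S}"
    using Z[of "\<lambda>n. n \<le> t - 1"] Z[of "\<lambda>_. True"] integral_if[of A] integral_if[of "{Y. Y (\<sigma> P) = 1}"]
    unfolding A_def \<kappa>_def by (simp add: mult.assoc)
  moreover have "0 \<le> B" unfolding B_def using t by simp
  ultimately show ?thesis unfolding H_def using cond_prob_le B_def by (simp add: mult.assoc)
qed

theorem lemma1:
  fixes n m k :: nat and c :: "nat \<Rightarrow> nat \<Rightarrow> real"
    and x :: "nat \<Rightarrow> nat \<Rightarrow> nat \<Rightarrow> real" and y :: "nat \<Rightarrow> real"
    and T :: ttree and j :: nat and \<sigma> :: "nat \<Rightarrow> nat" and \<epsilon> :: real
    and l t r :: nat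
  assumes "k \<le> m"
    and "\<forall>i\<in>{1..m}. \<forall>j'\<in>{1..n}. 0 \<le> c i j'"
    and "lp_optimal n m k c x y"
    and "\<forall>i\<in>{1..m}. y i \<in> \<rat>"
    and "\<forall>l'\<in>{1..k}. \<forall>i\<in>{1..m}. \<forall>j'\<in>{1..n}. x l' i j' \<in> \<rat>"
    and "distinct (leaves T)" and "set (leaves T) = {1..m}"
    and "j \<in> {1..n}"
    and "bij_betw \<sigma> {1..m} {1..m}"
    and "\<forall>p\<in>{1..m}. \<forall>q\<in>{1..m}. p \<le> q \<longrightarrow> c (\<sigma> p) j \<le> c (\<sigma> q) j"
    and "\<epsilon> > 0"
    and "\<exists>N::nat. 1 / \<epsilon> = real N"
    and "\<forall>i\<in>{1..m}. \<exists>q::nat. y i / \<epsilon> = real q"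
    and "l \<in> {1..k}"
    and "t \<in> {1..l - 1}"
    and "(real l - 1) / \<epsilon> + 1 \<le> real r" and "real r \<le> real l / \<epsilon>"
  shows "H m y T \<sigma> \<epsilon> r (t - 1) \<le> exp (- real r * \<epsilon>) * (exp 1 * real r * \<epsilon> / real t) ^ t"
proof -
  have ysum: "(\<Sum>i=1..m. y i) = real k" and y01: "\<forall>i\<in>{1..m}. 0 \<le> y i \<and> y i \<le> 1"
    using assms(3) by (simp_all add: lp_optimal_def lp_feasible_def)
  have r_lower: "real l - 1 + \<epsilon> \<le> real r * \<epsilon>" and "0 \<le> (real l - 1) / \<epsilon>"
    using assms(11,14,16) by (simp_all add: field_simps)
  then have "1 \<le> r" using assms(16) by linarith
  moreover have "real r \<le> submax y \<sigma> \<epsilon> m"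
    using assms(11,14,17) submax_eq_sum[OF assms(9)] ysum by (simp add: divide_right_mono order_trans)
  ultimately obtain P where "P \<in> {1..m}" "r \<in> sub_blk y \<sigma> \<epsilon> P" by (rule ex_mem_sub_blk)
  moreover have "real t < real r * \<epsilon>" using r_lower assms(11,15) by auto
  ultimately show ?thesis
    using H_le_chernoff[OF assms(6,7) y01 ysum assms(9,11,13)] assms(15) by auto
qed

end
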